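(* Let $\lambda_1,\lambda_2\in P^+$ with $\lambda_1+\lambda_2=\lambda$, and let $K\ge2$. Then there is a surjective homomorphism of $\mathfrak{sl}_n\otimes\mathbb C[t]$-modules $W_{\mathbb C[t]/(t^K)}(0,\lambda)\twoheadrightarrow F_{\lambda_1,\lambda_2}$.
   Context: $\mathfrak{sl}_n=\mathfrak n^+\oplus\mathfrak h\oplus\mathfrak n^-$, $R^+$ positive roots, $P^+$ dominant integral weights; for $\alpha\in R^+$ fix an $\mathfrak{sl}_2$-triple $e_\alpha,f_\alpha,h_\alpha$ with $f_\alpha\in\mathfrak g_{-\alpha}$. For a commutative algebra $A$, $\mathfrak{sl}_n\otimes A$ has bracket $[x\otimes p,y\otimes q]=[x,y]\otimes pq$; modules for $\mathfrak{sl}_n\otimes\mathbb C[t]/(t^K)$ are regarded as $\mathfrak{sl}_n\otimes\mathbb C[t]$-modules via the quotient map. For $A=\mathbb C[t]/(t^K)$ and $\lambda\in P^+$, the graded local Weyl module $W_A(0,\lambda)$ is the $\mathfrak{sl}_n\otimes A$-module generated by $w$ subject to $(\mathfrak n^+\otimes A).w=0$, $(\mathfrak h\otimes tA).w=0$, $(h\otimes1).w=\lambda(h)w$ for $h\in\mathfrak h$, and $(f_\alpha\otimes1)^{\lambda(h_\alpha)+1}.w=0$ for $\alpha\in R^+$ (i.e. the maximal $\mathfrak{sl}_n$-integrable quotient of the module induced from the one-dimensional $(\mathfrak n^+\oplus\mathfrak h)\otimes A$-module on which $\mathfrak n^+\otimes A$ acts by $0$ and $h\otimes p$ acts by $p(0)\lambda(h)$).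 For $\nu=\lambda_1+\lambda_2$, $F_{\lambda_1,\lambda_2}$ is the $\mathfrak{sl}_n\otimes\mathbb C[t]$-module generated by $\mathbb 1$ subject to $(\mathfrak n^+\otimes\mathbb C[t]).\mathbb 1=0$, $(\mathfrak h\otimes t\mathbb C[t]).\mathbb 1=0$, $(\mathfrak n^-\otimes t^2\mathbb C[t]).\mathbb 1=0$, $(h\otimes1).\mathbb 1=\nu(h)\mathbb 1$, and for $\alpha\in R^+$: $(f_\alpha\otimes1)^{\nu(h_\alpha)+1}.\mathbb 1=0$, $(f_\alpha\otimes t)^{\min\{\lambda_1(h_\alpha),\lambda_2(h_\alpha)\}+1}.\mathbb 1=0$. *)

theory Defs
  imports "HOL-Computational_Algebra.Polynomial"
begin

text \<open>sl_n tensor C[t] is realised as traceless n x n matrices with entries in C[t]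
  (x tensor p corresponds to p times x); indices are 0..n-1, entries outside are 0.\<close>

type_synonym cmat = "nat \<Rightarrow> nat \<Rightarrow> complex poly"

definition in_sl :: "nat \<Rightarrow> cmat \<Rightarrow> bool" where
  "in_sl n A \<longleftrightarrow> (\<forall>i j. (n \<le> i \<or> n \<le> j) \<longrightarrow> A i j = 0) \<and> (\<Sum>i<n. A i i) = 0"

definition mat_add :: "cmat \<Rightarrow> cmat \<Rightarrow> cmat" where
  "mat_add A B = (\<lambda>i j. A i j + B i j)"

definition mat_scale :: "complex \<Rightarrow> cmat \<Rightarrow> cmat" where
  "mat_scale c A = (\<lambda>i j. smult c (A i j))"

definition mat_mul :: "nat \<Rightarrow> cmat \<Rightarrow> cmat \<Rightarrow> cmat" where
  "mat_mul n A B = (\<lambda>i j. \<Sum>k<n. A i k * B k j)"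

definition lie_br :: "nat \<Rightarrow> cmat \<Rightarrow> cmat \<Rightarrow> cmat" where
  "lie_br n A B = (\<lambda>i j. mat_mul n A B i j - mat_mul n B A i j)"

definition E :: "nat \<Rightarrow> nat \<Rightarrow> complex poly \<Rightarrow> cmat" where
  "E i j p = (\<lambda>a b. if a = i \<and> b = j then p else 0)"

definition diagc :: "nat \<Rightarrow> (nat \<Rightarrow> complex) \<Rightarrow> cmat" where
  "diagc n d = (\<lambda>a b. if a = b \<and> a < n then [:d a:] else 0)"

definition is_module :: "nat \<Rightarrow> (complex \<Rightarrow> 'v::ab_group_add \<Rightarrow> 'v) \<Rightarrow> (cmat \<Rightarrow> 'v \<Rightarrow> 'v) \<Rightarrow> bool" where
  "is_module n smul act \<longleftrightarrow>
     (\<forall>a x y. smul a (x + y) = smul a x + smul a y) \<and>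
     (\<forall>a b x. smul (a + b) x = smul a x + smul b x) \<and>
     (\<forall>a b x. smul a (smul b x) = smul (a * b) x) \<and>
     (\<forall>x. smul 1 x = x) \<and>
     (\<forall>A x y. in_sl n A \<longrightarrow> act A (x + y) = act A x + act A y) \<and>
     (\<forall>A c x. in_sl n A \<longrightarrow> act A (smul c x) = smul c (act A x)) \<and>
     (\<forall>A B x. in_sl n A \<and> in_sl n B \<longrightarrow> act (mat_add A B) x = act A x + act B x) \<and>
     (\<forall>A c x. in_sl n A \<longrightarrow> act (mat_scale c A) x = smul c (act A x)) \<and>
     (\<forall>A B x. in_sl n A \<and> in_sl n B \<longrightarrow>
        act (lie_br n A B) x = act A (act B x) - act B (act A x))"

definition is_hom :: "nat \<Rightarrow> (complex \<Rightarrow> 'v::ab_group_add \<Rightarrow> 'v) \<Rightarrow> (cmat \<Rightarrow> 'v \<Rightarrow> 'v)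
    \<Rightarrow> (complex \<Rightarrow> 'u::ab_group_add \<Rightarrow> 'u) \<Rightarrow> (cmat \<Rightarrow> 'u \<Rightarrow> 'u) \<Rightarrow> ('v \<Rightarrow> 'u) \<Rightarrow> bool" where
  "is_hom n smul act smul' act' f \<longleftrightarrow>
     (\<forall>x y. f (x + y) = f x + f y) \<and>
     (\<forall>c x. f (smul c x) = smul' c (f x)) \<and>
     (\<forall>A x. in_sl n A \<longrightarrow> f (act A x) = act' A (f x))"

inductive_set cyclic_sub :: "nat \<Rightarrow> (complex \<Rightarrow> 'v::ab_group_add \<Rightarrow> 'v) \<Rightarrow> (cmat \<Rightarrow> 'v \<Rightarrow> 'v) \<Rightarrow> 'v \<Rightarrow> 'v set"
  for n smul act w where
  gen: "w \<in> cyclic_sub n smul act w"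
| add: "x \<in> cyclic_sub n smul act w \<Longrightarrow> y \<in> cyclic_sub n smul act w \<Longrightarrow> x + y \<in> cyclic_sub n smul act w"
| scale: "x \<in> cyclic_sub n smul act w \<Longrightarrow> smul c x \<in> cyclic_sub n smul act w"
| act: "in_sl n A \<Longrightarrow> x \<in> cyclic_sub n smul act w \<Longrightarrow> act A x \<in> cyclic_sub n smul act w"

text \<open>The ideal sl_n tensor t^K C[t] acts by zero (so the module is a module for
  sl_n tensor C[t]/(t^K), pulled back along the quotient map).\<close>
definition kills_ideal :: "nat \<Rightarrow> nat \<Rightarrow> (cmat \<Rightarrow> 'v::ab_group_add \<Rightarrow> 'v) \<Rightarrow> bool" where
  "kills_ideal n K act \<longleftrightarrow>
     (\<forall>A x. in_sl n A \<and> (\<forall>a b. [:0, 1:] ^ K dvd A a b) \<longrightarrow> act A x = 0)"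

text \<open>Dominant integral weights are given by their coordinates lam k = lambda(h_{alpha_k})
  (k < n-1) w.r.t. the fundamental weights omega_k, where omega_k(diag d) = d_0 + ... + d_k.\<close>
definition wt :: "nat \<Rightarrow> (nat \<Rightarrow> nat) \<Rightarrow> (nat \<Rightarrow> complex) \<Rightarrow> complex" where
  "wt n lam d = (\<Sum>k<n - 1. of_nat (lam k) * (\<Sum>m\<le>k. d m))"

text \<open>lambda(h_alpha) for the positive root alpha = eps_i - eps_j, i < j.\<close>
definition wt_root :: "(nat \<Rightarrow> nat) \<Rightarrow> nat \<Rightarrow> nat \<Rightarrow> nat" where
  "wt_root lam i j = (\<Sum>k\<in>{i..<j}. lam k)"

definition strictly_upper :: "cmat \<Rightarrow> bool" where
  "strictly_upper A \<longleftrightarrow> (\<forall>a b. b \<le> a \<longrightarrow> A a b = 0)"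

definition strictly_lower :: "cmat \<Rightarrow> bool" where
  "strictly_lower A \<longleftrightarrow> (\<forall>a b. a \<le> b \<longrightarrow> A a b = 0)"

definition is_diag :: "cmat \<Rightarrow> bool" where
  "is_diag A \<longleftrightarrow> (\<forall>a b. a \<noteq> b \<longrightarrow> A a b = 0)"

text \<open>Defining relations of the local Weyl module (f_alpha = E_{ji} for alpha = eps_i - eps_j).\<close>
definition weyl_rel :: "nat \<Rightarrow> (nat \<Rightarrow> nat) \<Rightarrow> (complex \<Rightarrow> 'v::ab_group_add \<Rightarrow> 'v)
    \<Rightarrow> (cmat \<Rightarrow> 'v \<Rightarrow> 'v) \<Rightarrow> 'v \<Rightarrow> bool" where
  "weyl_rel n lam smul act w \<longleftrightarrow>
     (\<forall>A. in_sl n A \<and> strictly_upper A \<longrightarrow> act A w = 0) \<and>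
     (\<forall>A. in_sl n A \<and> is_diag A \<and> (\<forall>a. coeff (A a a) 0 = 0) \<longrightarrow> act A w = 0) \<and>
     (\<forall>d. (\<Sum>m<n. d m) = 0 \<longrightarrow> act (diagc n d) w = smul (wt n lam d) w) \<and>
     (\<forall>i j. i < j \<and> j < n \<longrightarrow> (act (E j i 1) ^^ (wt_root lam i j + 1)) w = 0)"

definition F_rel :: "nat \<Rightarrow> (nat \<Rightarrow> nat) \<Rightarrow> (nat \<Rightarrow> nat) \<Rightarrow> (complex \<Rightarrow> 'v::ab_group_add \<Rightarrow> 'v)
    \<Rightarrow> (cmat \<Rightarrow> 'v \<Rightarrow> 'v) \<Rightarrow> 'v \<Rightarrow> bool" where
  "F_rel n l1 l2 smul act v \<longleftrightarrow>
     (\<forall>A. in_sl n A \<and> strictly_upper A \<longrightarrow> act A v = 0) \<and>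
     (\<forall>A. in_sl n A \<and> is_diag A \<and> (\<forall>a. coeff (A a a) 0 = 0) \<longrightarrow> act A v = 0) \<and>
     (\<forall>A. in_sl n A \<and> strictly_lower A \<and> (\<forall>a b. [:0, 1:] ^ 2 dvd A a b) \<longrightarrow> act A v = 0) \<and>
     (\<forall>d. (\<Sum>m<n. d m) = 0 \<longrightarrow> act (diagc n d) v = smul (wt n (\<lambda>k. l1 k + l2 k) d) v) \<and>
     (\<forall>i j. i < j \<and> j < n \<longrightarrow>
        (act (E j i 1) ^^ (wt_root (\<lambda>k. l1 k + l2 k) i j + 1)) v = 0) \<and>
     (\<forall>i j. i < j \<and> j < n \<longrightarrow>
        (act (E j i [:0, 1:]) ^^ (min (wt_root l1 i j) (wt_root l2 i j) + 1)) v = 0)"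

text \<open>W_{C[t]/(t^K)}(0,lam): generated by w, relations hold, the ideal sl_n tensor t^K acts
  trivially, and universal among such modules whose carrier is the type 'u.\<close>
definition is_weyl_module :: "nat \<Rightarrow> nat \<Rightarrow> (nat \<Rightarrow> nat) \<Rightarrow> (complex \<Rightarrow> 'v::ab_group_add \<Rightarrow> 'v)
    \<Rightarrow> (cmat \<Rightarrow> 'v \<Rightarrow> 'v) \<Rightarrow> 'v \<Rightarrow> 'u::ab_group_add itself \<Rightarrow> bool" where
  "is_weyl_module n K lam smul act w _ \<longleftrightarrow>
     is_module n smul act \<and> kills_ideal n K act \<and> cyclic_sub n smul act w = UNIV \<and>
     weyl_rel n lam smul act w \<and>
     (\<forall>(smul' :: complex \<Rightarrow> 'u \<Rightarrow> 'u) act' v'.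
        is_module n smul' act' \<and> kills_ideal n K act' \<and> weyl_rel n lam smul' act' v' \<longrightarrow>
        (\<exists>f. is_hom n smul act smul' act' f \<and> f w = v'))"

definition is_F_module :: "nat \<Rightarrow> (nat \<Rightarrow> nat) \<Rightarrow> (nat \<Rightarrow> nat) \<Rightarrow> (complex \<Rightarrow> 'v::ab_group_add \<Rightarrow> 'v)
    \<Rightarrow> (cmat \<Rightarrow> 'v \<Rightarrow> 'v) \<Rightarrow> 'v \<Rightarrow> 'u::ab_group_add itself \<Rightarrow> bool" where
  "is_F_module n l1 l2 smul act v _ \<longleftrightarrow>
     is_module n smul act \<and> cyclic_sub n smul act v = UNIV \<and>
     F_rel n l1 l2 smul act v \<and>
     (\<forall>(smul' :: complex \<Rightarrow> 'u \<Rightarrow> 'u) act' v'.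
        is_module n smul' act' \<and> F_rel n l1 l2 smul' act' v' \<longrightarrow>
        (\<exists>f. is_hom n smul act smul' act' f \<and> f v = v'))"

end

theory Submission
  imports Defs
begin

text \<open>The defining relations of \<open>F\<^bsub>\<lambda>\<^sub>1,\<lambda>\<^sub>2\<^esub>\<close> contain those of the local Weyl module,
  so the universal property of \<open>W\<close> yields a map \<open>w \<mapsto> \<one>\<close>, which is onto because \<open>\<one>\<close>
  generates \<open>F\<close>. The only point to check is that \<open>sl\<^sub>n \<otimes> t\<^sup>K\<complex>[t]\<close> acts by zero on \<open>F\<close>.
  Already \<open>sl\<^sub>n \<otimes> t\<^sup>2\<complex>[t]\<close> kills \<open>\<one>\<close>: its upper triangular and diagonal parts do so
  by the highest weight relations, its lower triangular part by definition of \<open>F\<close>.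
  Since this is an ideal, its annihilator is a submodule, hence all of \<open>F\<close>.\<close>

lemma coeff_0_eq_0_if_X_dvd:
  fixes p :: "'a::comm_ring_1 poly"
  assumes "[:0, 1:] dvd p"
  shows "coeff p 0 = 0"
  using assms by (simp add: dvd_iff_poly_eq_0 poly_0_coeff_0)

lemma in_sl_lie_br:
  assumes "in_sl n A" "in_sl n B"
  shows "in_sl n (lie_br n A B)"
proof -
  have outside: "lie_br n A B i j = 0" if "n \<le> i \<or> n \<le> j" for i j
    using that assms unfolding in_sl_def lie_br_def mat_mul_def by auto
  have "(\<Sum>i<n. \<Sum>k<n. A i k * B k i) = (\<Sum>i<n. \<Sum>k<n. B i k * A k i)"
    by (subst sum.swap) (simp add: mult.commute)
  then have "(\<Sum>i<n. lie_br n A B i i) = 0"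
    unfolding lie_br_def mat_mul_def by (simp add: sum_subtractf)
  with outside show ?thesis
    unfolding in_sl_def by blast
qed

lemma lie_br_entries_dvd:
  assumes "\<forall>a b. (d :: complex poly) dvd A a b"
  shows "\<forall>a b. d dvd lie_br n A B a b"
  unfolding lie_br_def mat_mul_def
  by (intro allI dvd_diff dvd_sum) (simp_all add: assms)

lemma F_rel_imp_weyl_rel:
  "F_rel n l1 l2 smul act v \<Longrightarrow> weyl_rel n (\<lambda>k. l1 k + l2 k) smul act v"
  unfolding F_rel_def weyl_rel_def by blast

lemma is_moduleD:
  assumes "is_module n smul act"
  shows "additive (smul c)"
    and "in_sl n A \<Longrightarrow> additive (act A)"
    and "in_sl n A \<Longrightarrow> act A (smul c x) = smul c (act A x)"
    and "in_sl n A \<Longrightarrow> in_sl n B \<Longrightarrow> act (mat_add A B) x = act A x + act B x"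
    and "in_sl n A \<Longrightarrow> in_sl n B \<Longrightarrow>
           act (lie_br n A B) x = act A (act B x) - act B (act A x)"
  using assms unfolding is_module_def additive_def by simp_all

lemma F_rel_kills_t2_currents:
  assumes M: "is_module n smul act" and R: "F_rel n l1 l2 smul act v"
    and A: "in_sl n A" and dvd: "\<forall>a b. [:0, 1:] ^ 2 dvd A a b"
  shows "act A v = 0"
proof -
  define U where "U = (\<lambda>a b. if a < b then A a b else 0)"
  define D where "D = (\<lambda>a b. if a = b then A a b else 0)"
  define L where "L = (\<lambda>a b. if b < a then A a b else 0)"
  have decomp: "A = mat_add U (mat_add D L)"
    unfolding mat_add_def U_def D_def L_def by (auto simp: fun_eq_iff)
  have sl_U: "in_sl n U" and sl_D: "in_sl n D" and sl_L: "in_sl n L"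
    using A unfolding in_sl_def U_def D_def L_def by auto
  have sl_DL: "in_sl n (mat_add D L)"
    using sl_D sl_L unfolding in_sl_def mat_add_def by (simp add: sum.distrib)
  have upper: "\<And>B. in_sl n B \<Longrightarrow> strictly_upper B \<Longrightarrow> act B v = 0"
    and diag: "\<And>B. in_sl n B \<Longrightarrow> is_diag B \<Longrightarrow> \<forall>a. coeff (B a a) 0 = 0 \<Longrightarrow> act B v = 0"
    and lower: "\<And>B. in_sl n B \<Longrightarrow> strictly_lower B \<Longrightarrow> \<forall>a b. [:0, 1:] ^ 2 dvd B a b
                  \<Longrightarrow> act B v = 0"
    using R unfolding F_rel_def by blast+
  have "strictly_upper U"
    unfolding strictly_upper_def U_def by simp
  with sl_U have U: "act U v = 0"
    by (rule upper)
  have "[:0, 1:] dvd A a b" for a b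
    using dvd dvd_trans[of "[:0, 1:]" "[:0, 1:] ^ 2"] by simp blast
  then have "\<forall>a. coeff (D a a) 0 = 0"
    unfolding D_def by (simp add: coeff_0_eq_0_if_X_dvd)
  moreover have "is_diag D"
    unfolding is_diag_def D_def by simp
  ultimately have D: "act D v = 0"
    using sl_D diag by blast
  have "strictly_lower L" "\<forall>a b. [:0, 1:] ^ 2 dvd L a b"
    unfolding strictly_lower_def L_def using dvd by simp_all
  with sl_L have L: "act L v = 0"
    by (rule lower)
  have "act A v = act U v + (act D v + act L v)"
    by (subst decomp) (simp add: is_moduleD(4)[OF M] sl_U sl_D sl_L sl_DL)
  with U D L show ?thesis
    by simp
qed

lemma cyclic_sub_annihilated:
  assumes M: "is_module n smul act"
    and gen: "\<And>A. in_sl n A \<Longrightarrow> \<forall>a b. d dvd A a b \<Longrightarrow> act A v = 0"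
    and x: "x \<in> cyclic_sub n smul act v"
    and A: "in_sl n A" "\<forall>a b. d dvd A a b"
  shows "act A x = 0"
  using x A
proof (induction arbitrary: A)
  case gen
  then show ?case by (rule assms(2))
next
  case (add x y)
  have "act A (x + y) = act A x + act A y"
    using additive.add[OF is_moduleD(2)[OF M add.prems(1)]] .
  with add.IH add.prems show ?case by simp
next
  case (scale x c)
  have "act A (smul c x) = smul c (act A x)"
    using is_moduleD(3)[OF M scale.prems(1)] .
  with scale.IH scale.prems show ?case
    using additive.zero[OF is_moduleD(1)[OF M]] by simp
next
  case (act B x)
  have "in_sl n (lie_br n A B)"
    using in_sl_lie_br[OF act.prems(1) act.hyps(1)] .
  moreover have "\<forall>a b. d dvd lie_br n A B a b"
    using lie_br_entries_dvd[OF act.prems(2)] .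
  ultimately have "act (lie_br n A B) x = 0"
    by (rule act.IH)
  moreover have "act (lie_br n A B) x = act A (act B x) - act B (act A x)"
    using is_moduleD(5)[OF M act.prems(1) act.hyps(1)] .
  moreover have "act A x = 0"
    using act.IH act.prems .
  moreover have "act B 0 = 0"
    using additive.zero[OF is_moduleD(2)[OF M act.hyps(1)]] .
  ultimately show ?case by simp
qed

lemma F_rel_kills_ideal:
  assumes M: "is_module n smul act" and R: "F_rel n l1 l2 smul act v"
    and gen: "cyclic_sub n smul act v = UNIV" and K: "2 \<le> K"
  shows "kills_ideal n K act"
  unfolding kills_ideal_def
proof (intro allI impI)
  fix A x
  assume A: "in_sl n A \<and> (\<forall>a b. [:0, 1:] ^ K dvd A a b)"
  have "([:0, 1:] :: complex poly) ^ 2 dvd [:0, 1:] ^ K"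
    using K by (rule le_imp_power_dvd)
  with A have t2: "\<forall>a b. [:0, 1:] ^ 2 dvd A a b"
    using dvd_trans by blast
  have "x \<in> cyclic_sub n smul act v"
    using gen by simp
  with A t2 show "act A x = 0"
    using cyclic_sub_annihilated[OF M F_rel_kills_t2_currents[OF M R]] by simp
qed

lemma cyclic_sub_subset_range:
  assumes f: "is_hom n smul act smul' act' f"
  shows "cyclic_sub n smul' act' (f w) \<subseteq> range f"
proof
  fix y
  assume "y \<in> cyclic_sub n smul' act' (f w)"
  then show "y \<in> range f"
  proof induction
    case gen
    show ?case by simp
  next
    case (add x y)
    then obtain a b where "x = f a" "y = f b" by blast
    with f have "x + y = f (a + b)" unfolding is_hom_def by simp
    then show ?case by simp
  next
    case (scale x c)
    then obtain a where "x = f a" by blast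
    with f have "smul' c x = f (smul c a)" unfolding is_hom_def by simp
    then show ?case by simp
  next
    case (act A x)
    then obtain a where "x = f a" by blast
    with f act(1) have "act' A x = f (act A a)" unfolding is_hom_def by simp
    then show ?case by simp
  qed
qed

theorem proposition9p4:
  fixes n K :: nat and l1 l2 :: "nat \<Rightarrow> nat"
    and smulW :: "complex \<Rightarrow> 'a::ab_group_add \<Rightarrow> 'a" and actW :: "cmat \<Rightarrow> 'a \<Rightarrow> 'a" and w :: 'a
    and smulF :: "complex \<Rightarrow> 'b::ab_group_add \<Rightarrow> 'b" and actF :: "cmat \<Rightarrow> 'b \<Rightarrow> 'b" and one :: 'b
  assumes "2 \<le> K"
    and "is_weyl_module n K (\<lambda>k. l1 k + l2 k) smulW actW w TYPE('a)"
    and "is_weyl_module n K (\<lambda>k. l1 k + l2 k) smulW actW w TYPE('b)"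
    and "is_F_module n l1 l2 smulF actF one TYPE('a)"
    and "is_F_module n l1 l2 smulF actF one TYPE('b)"
  shows "\<exists>f. is_hom n smulW actW smulF actF f \<and> surj f"
proof -
  have M: "is_module n smulF actF" and gen: "cyclic_sub n smulF actF one = UNIV"
    and R: "F_rel n l1 l2 smulF actF one"
    using assms(5) unfolding is_F_module_def by auto
  have "kills_ideal n K actF"
    using F_rel_kills_ideal[OF M R gen assms(1)] .
  then obtain f where f: "is_hom n smulW actW smulF actF f" and "f w = one"
    using assms(3) M F_rel_imp_weyl_rel[OF R] unfolding is_weyl_module_def by blast
  then have "surj f"
    using cyclic_sub_subset_range[OF f, of w] gen by auto
  with f show ?thesis by blast
qed

end
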